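(* Let $0<\delta_0<1$ and $B=\max\big(\frac5{\delta_0},\frac1{0.45}\ln\frac5{\delta_0^2}\big)$. There exists $m\in\mathbb{N}$ such that the polynomial \[h_2(x)=1-(1-x)^3\sum_{l=0}^m\frac{(-Bx)^l}{l!}\] has zero constant term and satisfies (i) $h_2'(1)=h_2''(1)=0$; (ii) for all $\Delta\in[-0.55,1/\delta_0^2]$, $|h_2(1+\Delta)-1|\le\frac{\delta_0^2|\Delta|}{5}$; (iii) for all $\Delta\in[-1,-0.55]$, $0\le h_2(1+\Delta)\le1$. *)

theory Defs
  imports "HOL-Computational_Algebra.Polynomial"
begin

definition B_const :: "real \<Rightarrow> real" where
  "B_const d0 = max (5 / d0) ((1 / 0.45) * ln (5 / d0\<^sup>2))"

definition h2 :: "real \<Rightarrow> nat \<Rightarrow> real poly" where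
  "h2 B m = 1 - [:1, -1:] ^ 3 * (\<Sum>l = 0..m. monom ((-B) ^ l / fact l) l)"

end

theory Submission imports Defs begin

text \<open>Writing $x = 1 + \<Delta>$ gives $h_2(1 + \<Delta>) = 1 + \<Delta>^3 T_m(B(1 + \<Delta>))$, where $T_m$ is the
  degree-$m$ Taylor polynomial of $e^{-y}$; the factor $\<Delta>^3$ makes the derivatives vanish at 1.
  For odd $m$ the Lagrange remainder of $T_m$ is nonnegative, so $0 \<le> T_m(y) \<le> e^{-y}$ on
  $[0, B(1 + 1/\<delta>_0^2)]$ once $m$ is large. Hence $|h_2(1 + \<Delta>) - 1| \<le> |\<Delta>| \<Delta>^2 e^{-B(1+\<Delta>)}$, and
  $\<Delta>^2 e^{-B(1+\<Delta>)} \<le> \<delta>_0^2/5$: for $\<Delta> \<le> 0$ because $e^{-0.45 B} \<le> \<delta>_0^2/5$, for $\<Delta> > 0$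
  because $\<Delta>^2 e^{-B\<Delta>} \<le> 4/B^2 \<le> 4\<delta>_0^2/25$.\<close>

definition exp_neg_taylor :: "nat \<Rightarrow> real \<Rightarrow> real" where
  "exp_neg_taylor m y = (\<Sum>l\<le>m. (-y) ^ l / fact l)"

lemma exp_neg_taylor_bounds:
  fixes y Y :: real
  assumes "0 \<le> y" "y \<le> Y" "odd m"
    and remainder: "exp Y * Y ^ Suc m / fact (Suc m) \<le> exp (-Y)"
  shows "0 \<le> exp_neg_taylor m y \<and> exp_neg_taylor m y \<le> exp (-y)"
proof -
  obtain t where "\<bar>t\<bar> \<le> \<bar>-y\<bar>"
    and lagrange: "exp (-y) = exp_neg_taylor m y + exp t / fact (Suc m) * y ^ Suc m"
    using Maclaurin_exp_le[of "-y" "Suc m"] assms(3)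
    by (auto simp: exp_neg_taylor_def lessThan_Suc_atMost)
  then have "exp t \<le> exp Y"
    using assms by simp
  then have "exp t / fact (Suc m) * y ^ Suc m \<le> exp Y / fact (Suc m) * Y ^ Suc m"
    by (intro mult_mono divide_right_mono power_mono) (use assms in auto)
  also have "\<dots> \<le> exp (-y)"
    using remainder assms(1,2) by (simp add: order_trans[of _ "exp (-Y)"])
  finally have "exp t / fact (Suc m) * y ^ Suc m \<le> exp (-y)" .
  moreover have "0 \<le> exp t / fact (Suc m) * y ^ Suc m"
    using assms(1) by simp
  ultimately show ?thesis
    using lagrange by linarith
qed

lemma exists_odd_exp_remainder_le:
  fixes Y \<epsilon> :: real
  assumes "0 < \<epsilon>"
  shows "\<exists>m. odd m \<and> exp Y * Y ^ Suc m / fact (Suc m) \<le> \<epsilon>"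
proof -
  have "(\<lambda>n. Y ^ n /\<^sub>R fact n) \<longlonglongrightarrow> 0"
    using exp_converges sums_summable summable_LIMSEQ_zero by blast
  then have "(\<lambda>n. exp Y * (Y ^ n /\<^sub>R fact n)) \<longlonglongrightarrow> 0"
    by (rule tendsto_mult_right_zero)
  then have "eventually (\<lambda>n. exp Y * (Y ^ n /\<^sub>R fact n) < \<epsilon>) sequentially"
    using assms by (rule order_tendstoD(2))
  then obtain N where N: "\<And>n. n \<ge> N \<Longrightarrow> exp Y * (Y ^ n /\<^sub>R fact n) < \<epsilon>"
    unfolding eventually_sequentially by blast
  have "exp Y * Y ^ Suc (2 * N + 1) / fact (Suc (2 * N + 1)) \<le> \<epsilon>"
    using N[of "Suc (2 * N + 1)"] by (simp add: divide_inverse mult.assoc mult.commute)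
  then show ?thesis
    by (intro exI[of _ "2 * N + 1"]) auto
qed

lemma poly_h2_shift:
  "poly (h2 B m) (1 + \<Delta>) = 1 + \<Delta> ^ 3 * exp_neg_taylor m (B * (1 + \<Delta>))"
proof -
  have "(-B) ^ l / fact l * (1 + \<Delta>) ^ l = (- (B * (1 + \<Delta>))) ^ l / fact l" for l
    by (simp add: power_mult_distrib[symmetric])
  then show ?thesis
    by (simp add: h2_def exp_neg_taylor_def poly_sum poly_monom atLeast0AtMost power_minus_odd)
qed

lemma coeff_0_h2: "coeff (h2 B m) 0 = 0"
proof -
  have "exp_neg_taylor m 0 = 1"
    by (induction m) (simp_all add: exp_neg_taylor_def)
  then have "poly (h2 B m) 0 = 0"
    using poly_h2_shift[of B m "-1"] by simp
  then show ?thesis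
    by (simp add: poly_0_coeff_0)
qed

lemma pderiv_cube_factor_vanishes:
  fixes q S :: "'a::idom poly"
  assumes "poly q a = 0"
  shows "poly (pderiv (1 - q ^ 3 * S)) a = 0 \<and> poly (pderiv (pderiv (1 - q ^ 3 * S))) a = 0"
  using assms by (simp add: power3_eq_cube pderiv_mult pderiv_diff pderiv_minus)

lemma pderiv_h2_1: "poly (pderiv (h2 B m)) 1 = 0 \<and> poly (pderiv (pderiv (h2 B m))) 1 = 0"
  unfolding h2_def by (rule pderiv_cube_factor_vanishes) simp

lemma exp_ge_sq_quarter:
  fixes z :: real
  assumes "0 \<le> z"
  shows "z ^ 2 / 4 \<le> exp z"
proof -
  have "(z / 2) ^ 2 \<le> exp (z / 2) ^ 2"
    using exp_ge_add_one_self[of "z / 2"] assms by (intro power_mono; linarith)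
  also have "\<dots> = exp z"
    by (simp add: exp_double[symmetric] power2_eq_square exp_add[symmetric])
  finally show ?thesis
    by (simp add: power_divide)
qed

lemma sq_mult_exp_neg_le:
  fixes B \<Delta> :: real
  assumes "0 < B" "0 \<le> \<Delta>"
  shows "\<Delta> ^ 2 * exp (- (B * \<Delta>)) \<le> 4 / B ^ 2"
proof -
  have "(B * \<Delta>) ^ 2 / 4 \<le> exp (B * \<Delta>)"
    using assms by (intro exp_ge_sq_quarter) simp
  then have "(B * \<Delta>) ^ 2 * exp (- (B * \<Delta>)) \<le> 4"
    by (simp add: exp_minus field_simps)
  then show ?thesis
    using assms(1) by (simp add: field_simps power_mult_distrib)
qed

lemma B_const_bounds:
  assumes "0 < d0"
  shows "5 / d0 \<le> B_const d0" "0 < B_const d0" "exp (- (0.45 * B_const d0)) \<le> d0 ^ 2 / 5"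
proof -
  show "5 / d0 \<le> B_const d0"
    unfolding B_const_def by simp
  moreover have "0 < 5 / d0"
    using assms by simp
  ultimately show "0 < B_const d0"
    by linarith
  have "ln (5 / d0 ^ 2) \<le> 0.45 * B_const d0"
    unfolding B_const_def by simp
  then have "exp (- (0.45 * B_const d0)) \<le> exp (- ln (5 / d0 ^ 2))"
    by simp
  also have "\<dots> = d0 ^ 2 / 5"
    using assms by (simp add: exp_minus)
  finally show "exp (- (0.45 * B_const d0)) \<le> d0 ^ 2 / 5" .
qed

lemma sq_mult_exp_shift_le:
  fixes B d0 \<Delta> :: real
  assumes "0 < d0" "5 / d0 \<le> B" "exp (- (0.45 * B)) \<le> d0 ^ 2 / 5" "-0.55 \<le> \<Delta>"
  shows "\<Delta> ^ 2 * exp (- (B * (1 + \<Delta>))) \<le> d0 ^ 2 / 5"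
proof -
  have "0 < 5 / d0"
    using assms(1) by simp
  with assms(2) have B: "0 < B"
    by linarith
  show ?thesis
  proof (cases "\<Delta> \<le> 0")
    case True
    have "\<Delta> ^ 2 \<le> 1"
      using assms(4) True by (simp add: abs_square_le_1)
    moreover have "exp (- (B * (1 + \<Delta>))) \<le> exp (- (0.45 * B))"
      using assms(4) B by simp
    ultimately have "\<Delta> ^ 2 * exp (- (B * (1 + \<Delta>))) \<le> 1 * exp (- (0.45 * B))"
      by (intro mult_mono) auto
    then show ?thesis
      using assms(3) by simp
  next
    case False
    have "\<Delta> ^ 2 * exp (- (B * (1 + \<Delta>))) \<le> \<Delta> ^ 2 * exp (- (B * \<Delta>))"
      using B by (intro mult_left_mono) auto
    also have "\<dots> \<le> 4 / B ^ 2"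
      using False B by (intro sq_mult_exp_neg_le) auto
    also have "\<dots> \<le> 4 / (5 / d0) ^ 2"
      using assms(1,2) by (intro divide_left_mono power_mono mult_pos_pos) auto
    also have "\<dots> \<le> d0 ^ 2 / 5"
      using assms(1) by (simp add: power_divide)
    finally show ?thesis .
  qed
qed

lemma h2_close_to_one:
  fixes B d0 \<Delta> :: real
  assumes "0 < d0" "5 / d0 \<le> B" "exp (- (0.45 * B)) \<le> d0 ^ 2 / 5" "-0.55 \<le> \<Delta>"
    and "0 \<le> exp_neg_taylor m (B * (1 + \<Delta>))"
    and "exp_neg_taylor m (B * (1 + \<Delta>)) \<le> exp (- (B * (1 + \<Delta>)))"
  shows "\<bar>poly (h2 B m) (1 + \<Delta>) - 1\<bar> \<le> d0 ^ 2 * \<bar>\<Delta>\<bar> / 5"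
proof -
  have "\<bar>poly (h2 B m) (1 + \<Delta>) - 1\<bar> = \<bar>\<Delta>\<bar> * (\<Delta> ^ 2 * exp_neg_taylor m (B * (1 + \<Delta>)))"
    using assms(5) by (simp add: poly_h2_shift abs_mult power3_eq_cube power2_eq_square)
  also have "\<dots> \<le> \<bar>\<Delta>\<bar> * (\<Delta> ^ 2 * exp (- (B * (1 + \<Delta>))))"
    using assms(6) by (intro mult_left_mono) auto
  also have "\<dots> \<le> \<bar>\<Delta>\<bar> * (d0 ^ 2 / 5)"
    using sq_mult_exp_shift_le[OF assms(1-4)] by (intro mult_left_mono) auto
  finally show ?thesis
    by (simp add: mult.commute)
qed

lemma h2_in_unit_interval:
  fixes \<Delta> :: real
  assumes "0 \<le> B" "-1 \<le> \<Delta>" "\<Delta> \<le> 0"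
    and "0 \<le> exp_neg_taylor m (B * (1 + \<Delta>))"
    and "exp_neg_taylor m (B * (1 + \<Delta>)) \<le> exp (- (B * (1 + \<Delta>)))"
  shows "0 \<le> poly (h2 B m) (1 + \<Delta>) \<and> poly (h2 B m) (1 + \<Delta>) \<le> 1"
proof -
  have "exp (- (B * (1 + \<Delta>))) \<le> 1"
    using assms(1,2) by simp
  then have taylor_le_1: "exp_neg_taylor m (B * (1 + \<Delta>)) \<le> 1"
    using assms(5) by linarith
  have "(-\<Delta>) ^ 3 \<le> 1"
    using assms(2,3) by (intro power_le_one) simp_all
  moreover have "0 \<le> (-\<Delta>) ^ 3"
    using assms(3) by simp
  ultimately have "(-\<Delta>) ^ 3 * exp_neg_taylor m (B * (1 + \<Delta>)) \<le> 1"
    "0 \<le> (-\<Delta>) ^ 3 * exp_neg_taylor m (B * (1 + \<Delta>))"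
    using assms(4) taylor_le_1 by (simp_all only: mult_le_one mult_nonneg_nonneg)
  moreover have "poly (h2 B m) (1 + \<Delta>) = 1 - (-\<Delta>) ^ 3 * exp_neg_taylor m (B * (1 + \<Delta>))"
    by (simp add: poly_h2_shift power_minus_odd)
  ultimately show ?thesis
    by linarith
qed

theorem lemma4p8:
  fixes d0 :: real
  assumes "0 < d0" and "d0 < 1"
  shows "\<exists>m::nat. let h = h2 (B_const d0) m in
           coeff h 0 = 0 \<and>
           poly (pderiv h) 1 = 0 \<and> poly (pderiv (pderiv h)) 1 = 0 \<and>
           (\<forall>\<Delta>::real. -0.55 \<le> \<Delta> \<and> \<Delta> \<le> 1 / d0\<^sup>2 \<longrightarrow>
              \<bar>poly h (1 + \<Delta>) - 1\<bar> \<le> d0\<^sup>2 * \<bar>\<Delta>\<bar> / 5) \<and>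
           (\<forall>\<Delta>::real. -1 \<le> \<Delta> \<and> \<Delta> \<le> -0.55 \<longrightarrow>
              0 \<le> poly h (1 + \<Delta>) \<and> poly h (1 + \<Delta>) \<le> 1)"
proof -
  define B where "B = B_const d0"
  note B_bounds = B_const_bounds[OF assms(1), folded B_def]
  define Y where "Y = B * (1 + 1 / d0 ^ 2)"
  obtain m where m: "odd m" "exp Y * Y ^ Suc m / fact (Suc m) \<le> exp (-Y)"
    using exists_odd_exp_remainder_le[of "exp (-Y)"] by auto
  have taylor: "0 \<le> exp_neg_taylor m (B * (1 + \<Delta>))"
      "exp_neg_taylor m (B * (1 + \<Delta>)) \<le> exp (- (B * (1 + \<Delta>)))"
    if "-1 \<le> \<Delta>" "\<Delta> \<le> 1 / d0 ^ 2" for \<Delta>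
    using exp_neg_taylor_bounds[OF _ _ m, of "B * (1 + \<Delta>)"] that B_bounds(2)
    by (auto simp: Y_def intro: mult_left_mono)
  have "\<Delta> \<le> 1 / d0 ^ 2" if "\<Delta> \<le> -0.55" for \<Delta>
    by (rule order_trans[of _ 0]) (use that in simp_all)
  then have "0 \<le> poly (h2 B m) (1 + \<Delta>) \<and> poly (h2 B m) (1 + \<Delta>) \<le> 1"
    if "-1 \<le> \<Delta>" "\<Delta> \<le> -0.55" for \<Delta>
    using that taylor[of \<Delta>] B_bounds(2) by (intro h2_in_unit_interval) auto
  moreover have "\<bar>poly (h2 B m) (1 + \<Delta>) - 1\<bar> \<le> d0 ^ 2 * \<bar>\<Delta>\<bar> / 5"
    if "-0.55 \<le> \<Delta>" "\<Delta> \<le> 1 / d0 ^ 2" for \<Delta>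
    using that taylor[of \<Delta>] by (intro h2_close_to_one assms(1) B_bounds(1,3)) auto
  ultimately show ?thesis
    unfolding Let_def B_def[symmetric] using coeff_0_h2 pderiv_h2_1 by blast
qed

end
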